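(* Let $N\geq 4$, $K\geq 2$, $1\leq l\leq K-1$, $K+1\leq r\leq N-1$ be integers, and for $1\leq k\leq N$ let $G_k:\mathbb{R}\to\mathbb{R}$ with $G_k\in L^1(\mathbb{R})$. (a) If $a_k>0$, $b_k\in\mathbb{R}$, $b_k\neq 0$ for $1\leq k\leq l$, then $N_{a,b,k}<\infty$. (b) If $a_k=0$, $b_k\in\mathbb{R}$, $b_k\neq0$ for $l+1\leq k\leq K$, and additionally $xG_k(x)\in L^1(\mathbb{R})$, then $N_{0,b,k}<\infty$ if and only if $\int_{\mathbb{R}}G_k(x)\,dx=0$. (c) If $a_k>0$ and $xG_k(x)\in L^1(\mathbb{R})$ for $K+1\leq k\leq r$, then $M_{a,k}<\infty$ if and only if $\int_{\mathbb{R}}G_k(x)e^{\mp i\sqrt{a_k}x}\,dx=0$ (for both signs). (d) If $a_k=0$ and $x^2G_k(x)\in L^1(\mathbb{R})$ for $r+1\leq k\leq N$, then $M_{0,k}<\infty$ if and only if $\int_{\mathbb{R}}G_k(x)\,dx=0$ and $\int_{\mathbb{R}}xG_k(x)\,dx=0$.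
   Context: Fourier transform: $\widehat{G_k}(p)=\frac{1}{\sqrt{2\pi}}\int_{\mathbb{R}}G_k(x)e^{-ipx}dx$. For constants $a_k\geq0$ and $b_k\in\mathbb{R}$, define $N_{a,b,k}=\max\Big\{\Big\|\frac{\widehat{G_k}(p)}{p^2-a_k-ib_kp}\Big\|_{L^\infty(\mathbb{R})},\Big\|\frac{p^2\widehat{G_k}(p)}{p^2-a_k-ib_kp}\Big\|_{L^\infty(\mathbb{R})}\Big\}$ and $M_{a,k}=\max\Big\{\Big\|\frac{\widehat{G_k}(p)}{p^2-a_k}\Big\|_{L^\infty(\mathbb{R})},\Big\|\frac{p^2\widehat{G_k}(p)}{p^2-a_k}\Big\|_{L^\infty(\mathbb{R})}\Big\}$; $N_{0,b,k}$ and $M_{0,k}$ denote these quantities when $a_k=0$. *)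

theory Defs
  imports "HOL-Analysis.Analysis"
begin

definition fourier :: "(real \<Rightarrow> real) \<Rightarrow> real \<Rightarrow> complex" where
  "fourier G p = complex_of_real (1 / sqrt (2 * pi)) *
     (LINT x|lborel. complex_of_real (G x) * exp (- (\<i> * complex_of_real (p * x))))"

definition Linf_finite :: "(real \<Rightarrow> complex) \<Rightarrow> bool" where
  "Linf_finite f \<longleftrightarrow> (\<exists>C. AE p in lborel. cmod (f p) \<le> C)"

definition N_finite :: "(real \<Rightarrow> real) \<Rightarrow> real \<Rightarrow> real \<Rightarrow> bool" where
  "N_finite G a b \<longleftrightarrow>
     Linf_finite (\<lambda>p. fourier G p / (complex_of_real (p\<^sup>2 - a) - \<i> * complex_of_real (b * p))) \<and>
     Linf_finite (\<lambda>p. complex_of_real (p\<^sup>2) * fourier G p /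
                     (complex_of_real (p\<^sup>2 - a) - \<i> * complex_of_real (b * p)))"

definition M_finite :: "(real \<Rightarrow> real) \<Rightarrow> real \<Rightarrow> bool" where
  "M_finite G a \<longleftrightarrow>
     Linf_finite (\<lambda>p. fourier G p / complex_of_real (p\<^sup>2 - a)) \<and>
     Linf_finite (\<lambda>p. complex_of_real (p\<^sup>2) * fourier G p / complex_of_real (p\<^sup>2 - a))"

end

theory Submission
  imports Defs "HOL-Probability.Characteristic_Functions"
begin

(*
  For G in L1 the Fourier transform is bounded by |G|_1 / sqrt (2 pi); if also x G is in L1 it is
  Lipschitz with constant |x G|_1 / sqrt (2 pi), and if x^2 G is in L1 it has the Taylor
  expansion  hat G (p) = hat G (0) - i p hat (x G) (0) + O(p^2),  where hat G (0) and hat (x G) (0)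
  are the integrals of G and x G up to the factor 1 / sqrt (2 pi).

  In (a) the symbol p^2 - a - i b p is bounded away from 0 and grows like p^2, so both quotients
  are bounded. In (b), (c), (d) the symbol vanishes at 0, at +-sqrt a, resp. to second order at 0.
  An essentially bounded quotient forces |hat G (p)| <= C |symbol (p)| almost everywhere, and
  continuity of hat G then makes it vanish at the zeros of the symbol; in (d), subtracting the
  bounded Taylor remainder from hat G (p) / p^2 leaves i hat (x G) (0) / p, which must vanish too.
  Conversely, the Lipschitz resp. Taylor estimate shows that these conditions make hat G divisible
  by the symbol with a bounded quotient.
*)

lemma Linf_finiteI: "(\<And>p. cmod (f p) \<le> C) \<Longrightarrow> Linf_finite f"
  unfolding Linf_finite_def by (intro exI[of _ C] AE_I2) auto

lemma Linf_finite_diff: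
  assumes "Linf_finite f" and "Linf_finite g"
  shows "Linf_finite (\<lambda>p. f p - g p)"
proof -
  obtain C D where "AE p in lborel. cmod (f p) \<le> C" and "AE p in lborel. cmod (g p) \<le> D"
    using assms unfolding Linf_finite_def by blast
  then have "AE p in lborel. cmod (f p - g p) \<le> C + D"
    by eventually_elim (meson add_mono norm_triangle_ineq4 order_trans)
  then show ?thesis unfolding Linf_finite_def by blast
qed

lemma AE_le_tendsto_imp_le:
  fixes h :: "real \<Rightarrow> real"
  assumes ae: "AE x in lborel. c \<le> h x" and lim: "(h \<longlongrightarrow> l) (at x0)"
  shows "c \<le> l"
proof (rule ccontr)
  assume "\<not> c \<le> l"
  then have "eventually (\<lambda>x. h x < c) (at_right x0)"
    using tendsto_mono[OF at_within_le_at lim] by (intro order_tendstoD) auto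
  then obtain b where "b > x0" and b: "\<And>x. x0 < x \<Longrightarrow> x < b \<Longrightarrow> h x < c"
    by (auto simp: eventually_at_right_field)
  from ae obtain N where N: "{x \<in> space lborel. \<not> c \<le> h x} \<subseteq> N"
    and "emeasure lborel N = 0" "N \<in> sets lborel"
    by (rule AE_E)
  then have "N \<in> null_sets lborel" by (simp add: null_setsI)
  moreover have "{x0<..<b} \<subseteq> N" using N b by force
  ultimately have "{x0<..<b} \<in> null_sets lborel" by (auto intro: null_sets_subset)
  then show False using \<open>b > x0\<close> by (simp add: null_sets_def)
qed

lemma Linf_finite_divide_imp_zero:
  fixes f d :: "real \<Rightarrow> complex"
  assumes bounded: "Linf_finite (\<lambda>p. f p / d p)" and nonzero: "AE p in lborel. d p \<noteq> 0"
    and "isCont f p0" and "isCont d p0" and "d p0 = 0"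
  shows "f p0 = 0"
proof -
  obtain C where "AE p in lborel. cmod (f p / d p) \<le> C"
    using bounded unfolding Linf_finite_def by blast
  with nonzero have "AE p in lborel. cmod (f p0) \<le> C * cmod (d p) + cmod (f p - f p0)"
  proof eventually_elim
    case (elim p)
    then have "cmod (f p) \<le> C * cmod (d p)"
      by (simp add: norm_divide pos_divide_le_eq)
    moreover have "cmod (f p0) \<le> cmod (f p) + cmod (f p - f p0)"
      using norm_triangle_sub[of "f p0" "f p"] by (simp add: norm_minus_commute)
    ultimately show ?case by linarith
  qed
  moreover have "((\<lambda>p. C * cmod (d p) + cmod (f p - f p0)) \<longlongrightarrow> C * cmod (d p0) + 0) (at p0)"
    using assms(3,4) unfolding isCont_def
    by (intro tendsto_add tendsto_mult_left tendsto_norm tendsto_norm_zero LIM_zero)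
  ultimately have "cmod (f p0) \<le> C * cmod (d p0) + 0"
    by (rule AE_le_tendsto_imp_le)
  then show ?thesis using \<open>d p0 = 0\<close> by simp
qed

lemma norm_exp_i_sub_1_le: "cmod (exp (\<i> * complex_of_real t) - 1) \<le> \<bar>t\<bar>"
  using iexp_approx1[of t 0] by simp

lemma norm_exp_i_sub_1_sub_le:
  "cmod (exp (\<i> * complex_of_real t) - 1 - \<i> * complex_of_real t) \<le> t\<^sup>2 / 2"
  using iexp_approx1[of t 1] by (simp add: power2_eq_square diff_diff_eq)

lemma integrable_fourier_kernel:
  assumes "integrable lborel G"
  shows "integrable lborel (\<lambda>x. complex_of_real (G x) * exp (- (\<i> * complex_of_real (p * x))))"
proof (rule Bochner_Integration.integrable_bound[of _ "\<lambda>x. complex_of_real (G x)"])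
  show "integrable lborel (\<lambda>x. complex_of_real (G x))" using assms by simp
  have "G \<in> borel_measurable lborel" using assms by auto
  then show "(\<lambda>x. complex_of_real (G x) * exp (- (\<i> * complex_of_real (p * x)))) \<in> borel_measurable lborel"
    by measurable
qed (simp add: norm_mult)

lemma fourier_eq_0_iff:
  "fourier G p = 0 \<longleftrightarrow>
     (LINT x|lborel. complex_of_real (G x) * exp (- (\<i> * complex_of_real (p * x)))) = 0"
  by (simp add: fourier_def)

lemma fourier_0: "fourier G 0 = complex_of_real ((LINT x|lborel. G x) / sqrt (2 * pi))"
  by (simp add: fourier_def)

lemma fourier_0_eq_0_iff: "fourier G 0 = 0 \<longleftrightarrow> (LINT x|lborel. G x) = 0"
  by (simp add: fourier_0)

lemma norm_fourier_le:
  assumes "integrable lborel G"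
  shows "cmod (fourier G p) \<le> (LINT x|lborel. \<bar>G x\<bar>) / sqrt (2 * pi)"
proof -
  have "cmod (LINT x|lborel. complex_of_real (G x) * exp (- (\<i> * complex_of_real (p * x))))
      \<le> (LINT x|lborel. \<bar>G x\<bar>)"
    using assms integrable_fourier_kernel
    by (intro Bochner_Integration.integral_norm_bound_integral) (auto simp: norm_mult)
  then show ?thesis by (simp add: fourier_def norm_divide divide_right_mono)
qed

lemma lipschitz_on_fourier:
  assumes G: "integrable lborel G" and xG: "integrable lborel (\<lambda>x. x * G x)"
  shows "((LINT x|lborel. \<bar>x * G x\<bar>) / sqrt (2 * pi))-lipschitz_on UNIV (fourier G)"
proof (rule lipschitz_onI)
  fix p q :: real
  let ?k = "\<lambda>p x. complex_of_real (G x) * exp (- (\<i> * complex_of_real (p * x)))"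
  have "fourier G p - fourier G q = complex_of_real (1 / sqrt (2 * pi)) * (LINT x|lborel. ?k p x - ?k q x)"
    using integrable_fourier_kernel[OF G]
    by (simp add: fourier_def Bochner_Integration.integral_diff right_diff_distrib)
  moreover have "cmod (LINT x|lborel. ?k p x - ?k q x) \<le> (LINT x|lborel. \<bar>p - q\<bar> * \<bar>x * G x\<bar>)"
  proof (rule Bochner_Integration.integral_norm_bound_integral)
    show "integrable lborel (\<lambda>x. ?k p x - ?k q x)" using integrable_fourier_kernel[OF G] by auto
    show "integrable lborel (\<lambda>x. \<bar>p - q\<bar> * \<bar>x * G x\<bar>)" using xG by auto
    fix x
    have "?k p x - ?k q x = ?k q x * (exp (\<i> * complex_of_real ((q - p) * x)) - 1)"
      by (simp add: algebra_simps flip: exp_add)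
    then have "cmod (?k p x - ?k q x) = \<bar>G x\<bar> * cmod (exp (\<i> * complex_of_real ((q - p) * x)) - 1)"
      by (simp add: norm_mult)
    also have "\<dots> \<le> \<bar>G x\<bar> * \<bar>(q - p) * x\<bar>"
      by (intro mult_left_mono norm_exp_i_sub_1_le) auto
    finally show "cmod (?k p x - ?k q x) \<le> \<bar>p - q\<bar> * \<bar>x * G x\<bar>"
      by (simp add: abs_mult abs_minus_commute mult_ac)
  qed
  ultimately show "dist (fourier G p) (fourier G q) \<le> (LINT x|lborel. \<bar>x * G x\<bar>) / sqrt (2 * pi) * dist p q"
    by (simp add: dist_norm norm_mult norm_divide divide_right_mono mult.commute)
qed (simp add: integral_nonneg_AE)

lemma isCont_fourier:
  assumes "integrable lborel G" and "integrable lborel (\<lambda>x. x * G x)"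
  shows "isCont (fourier G) p"
  using lipschitz_on_continuous_on[OF lipschitz_on_fourier[OF assms]]
  by (simp add: continuous_on_eq_continuous_at)

lemma fourier_taylor2_remainder_eq:
  assumes G: "integrable lborel G" and xG: "integrable lborel (\<lambda>x. x * G x)"
  shows "fourier G p - fourier G 0 + \<i> * complex_of_real p * fourier (\<lambda>x. x * G x) 0
    = complex_of_real (1 / sqrt (2 * pi)) * (LINT x|lborel. complex_of_real (G x) *
        (exp (- (\<i> * complex_of_real (p * x))) - 1 + \<i> * complex_of_real (p * x)))"
proof -
  let ?k = "\<lambda>x. complex_of_real (G x) * exp (- (\<i> * complex_of_real (p * x)))"
  have ints: "integrable lborel ?k" "integrable lborel (\<lambda>x. complex_of_real (G x))"
    "integrable lborel (\<lambda>x. complex_of_real (x * G x))"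
    by (intro integrable_fourier_kernel integrable_of_real G xG)+
  have integrand_eq: "(\<lambda>x. complex_of_real (G x) *
        (exp (- (\<i> * complex_of_real (p * x))) - 1 + \<i> * complex_of_real (p * x)))
      = (\<lambda>x. (?k x - complex_of_real (G x)) + \<i> * complex_of_real p * complex_of_real (x * G x))"
    by (simp add: algebra_simps)
  have "(LINT x|lborel. (?k x - complex_of_real (G x)) + \<i> * complex_of_real p * complex_of_real (x * G x))
      = (LINT x|lborel. ?k x - complex_of_real (G x)) + (LINT x|lborel. \<i> * complex_of_real p * complex_of_real (x * G x))"
    using ints by (intro Bochner_Integration.integral_add Bochner_Integration.integrable_diff integrable_mult_right)
  also have "\<dots> = (LINT x|lborel. ?k x) - complex_of_real (LINT x|lborel. G x)
      + \<i> * complex_of_real p * complex_of_real (LINT x|lborel. x * G x)"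
    by (simp only: Bochner_Integration.integral_diff integral_mult_right_zero integral_complex_of_real ints)
  finally have integral_eq: "(LINT x|lborel. (?k x - complex_of_real (G x)) + \<i> * complex_of_real p * complex_of_real (x * G x)) = \<dots>" .
  show ?thesis
    unfolding integrand_eq integral_eq fourier_0 by (simp add: fourier_def algebra_simps)
qed

lemma norm_fourier_taylor2_le:
  assumes G: "integrable lborel G" and xG: "integrable lborel (\<lambda>x. x * G x)"
    and x2G: "integrable lborel (\<lambda>x. x\<^sup>2 * G x)"
  shows "cmod (fourier G p - fourier G 0 + \<i> * complex_of_real p * fourier (\<lambda>x. x * G x) 0)
     \<le> (LINT x|lborel. \<bar>x\<^sup>2 * G x\<bar>) / (2 * sqrt (2 * pi)) * p\<^sup>2"
proof -
  let ?r = "\<lambda>x. complex_of_real (G x) *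
    (exp (- (\<i> * complex_of_real (p * x))) - 1 + \<i> * complex_of_real (p * x))"
  have pointwise: "cmod (?r x) \<le> p\<^sup>2 / 2 * \<bar>x\<^sup>2 * G x\<bar>" for x
  proof -
    have "cmod (exp (- (\<i> * complex_of_real (p * x))) - 1 + \<i> * complex_of_real (p * x)) \<le> (p * x)\<^sup>2 / 2"
      using norm_exp_i_sub_1_sub_le[of "- (p * x)"] by simp
    then have "\<bar>G x\<bar> * cmod (exp (- (\<i> * complex_of_real (p * x))) - 1 + \<i> * complex_of_real (p * x))
        \<le> \<bar>G x\<bar> * ((p * x)\<^sup>2 / 2)"
      by (rule mult_left_mono) simp
    then show ?thesis by (simp add: norm_mult abs_mult power_mult_distrib mult_ac)
  qed
  have "integrable lborel (\<lambda>x. p\<^sup>2 / 2 * \<bar>x\<^sup>2 * G x\<bar>)" using x2G by auto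
  moreover have "integrable lborel ?r"
  proof (rule Bochner_Integration.integrable_bound)
    show "integrable lborel (\<lambda>x. p\<^sup>2 / 2 * \<bar>x\<^sup>2 * G x\<bar>)" by fact
    have "G \<in> borel_measurable lborel" using G by auto
    then show "?r \<in> borel_measurable lborel" by measurable
    show "AE x in lborel. norm (?r x) \<le> norm (p\<^sup>2 / 2 * \<bar>x\<^sup>2 * G x\<bar>)"
      by (intro AE_I2 order_trans[OF pointwise]) simp
  qed
  ultimately have bound: "cmod (LINT x|lborel. ?r x) \<le> (LINT x|lborel. p\<^sup>2 / 2 * \<bar>x\<^sup>2 * G x\<bar>)"
    using pointwise by (intro Bochner_Integration.integral_norm_bound_integral)
  have "cmod (fourier G p - fourier G 0 + \<i> * complex_of_real p * fourier (\<lambda>x. x * G x) 0)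
      = cmod (LINT x|lborel. ?r x) / sqrt (2 * pi)"
    unfolding fourier_taylor2_remainder_eq[OF G xG] by (simp add: norm_mult norm_divide)
  also have "\<dots> \<le> (LINT x|lborel. p\<^sup>2 / 2 * \<bar>x\<^sup>2 * G x\<bar>) / sqrt (2 * pi)"
    using bound by (rule divide_right_mono) simp
  also have "\<dots> = (LINT x|lborel. \<bar>x\<^sup>2 * G x\<bar>) / (2 * sqrt (2 * pi)) * p\<^sup>2"
    by simp
  finally show ?thesis .
qed

lemma integrable_first_moment:
  fixes G :: "real \<Rightarrow> real"
  assumes "integrable lborel G" and "integrable lborel (\<lambda>x. x\<^sup>2 * G x)"
  shows "integrable lborel (\<lambda>x. x * G x)"
proof (rule Bochner_Integration.integrable_bound[of _ "\<lambda>x. \<bar>G x\<bar> + \<bar>x\<^sup>2 * G x\<bar>"])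
  show "integrable lborel (\<lambda>x. \<bar>G x\<bar> + \<bar>x\<^sup>2 * G x\<bar>)" using assms by auto
  have "G \<in> borel_measurable lborel" using assms by auto
  then show "(\<lambda>x. x * G x) \<in> borel_measurable lborel" by measurable
  show "AE x in lborel. norm (x * G x) \<le> norm (\<bar>G x\<bar> + \<bar>x\<^sup>2 * G x\<bar>)"
  proof (rule AE_I2)
    fix x :: real
    have "\<bar>x\<bar> \<le> 1 + x\<^sup>2"
      using zero_le_power2[of "\<bar>x\<bar> - 1"] by (simp add: power2_diff)
    then have "\<bar>x\<bar> * \<bar>G x\<bar> \<le> (1 + x\<^sup>2) * \<bar>G x\<bar>" by (rule mult_right_mono) auto
    then show "norm (x * G x) \<le> norm (\<bar>G x\<bar> + \<bar>x\<^sup>2 * G x\<bar>)"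
      by (simp add: abs_mult algebra_simps)
  qed
qed

lemma Linf_finite_fourier_taylor2_remainder:
  assumes G: "integrable lborel G" and x2G: "integrable lborel (\<lambda>x. x\<^sup>2 * G x)"
  shows "Linf_finite (\<lambda>p. (fourier G p - fourier G 0 + \<i> * complex_of_real p * fourier (\<lambda>x. x * G x) 0)
    / complex_of_real (p\<^sup>2))"
proof (rule Linf_finiteI)
  fix p :: real
  define T where "T = (LINT x|lborel. \<bar>x\<^sup>2 * G x\<bar>) / (2 * sqrt (2 * pi))"
  have taylor: "cmod (fourier G p - fourier G 0 + \<i> * complex_of_real p * fourier (\<lambda>x. x * G x) 0) \<le> T * p\<^sup>2"
    unfolding T_def using G integrable_first_moment[OF G x2G] x2G by (rule norm_fourier_taylor2_le)
  show "cmod ((fourier G p - fourier G 0 + \<i> * complex_of_real p * fourier (\<lambda>x. x * G x) 0)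
    / complex_of_real (p\<^sup>2)) \<le> T"
  proof (cases "p = 0")
    case True
    then show ?thesis by (simp add: T_def integral_nonneg_AE)
  next
    case False
    then show ?thesis
      using taylor by (simp add: norm_divide pos_divide_le_eq del: of_real_power)
  qed
qed

lemma norm_quadratic_symbol_ge:
  assumes "a > 0" and "b \<noteq> 0"
  shows "min (3 * a / 4) (\<bar>b\<bar> * sqrt a / 2) \<le> cmod (complex_of_real (p\<^sup>2 - a) - \<i> * complex_of_real (b * p))"
    (is "_ \<le> cmod ?d")
proof (cases "\<bar>p\<bar> \<le> sqrt a / 2")
  case True
  then have "p\<^sup>2 \<le> (sqrt a / 2)\<^sup>2" by (metis abs_ge_zero power2_abs power_mono)
  then have "3 * a / 4 \<le> \<bar>Re ?d\<bar>" using assms by (simp add: power_divide)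
  then show ?thesis using abs_Re_le_cmod[of ?d] by linarith
next
  case False
  then have "\<bar>b\<bar> * (sqrt a / 2) \<le> \<bar>Im ?d\<bar>"
    using assms by (simp add: abs_mult mult_left_mono)
  then show ?thesis using abs_Im_le_cmod[of ?d] by linarith
qed

lemma N_finite_if_pos:
  assumes G: "integrable lborel G" and "a > 0" and "b \<noteq> 0"
  shows "N_finite G a b"
proof -
  define d where "d p = complex_of_real (p\<^sup>2 - a) - \<i> * complex_of_real (b * p)" for p
  define m where "m = min (3 * a / 4) (\<bar>b\<bar> * sqrt a / 2)"
  define B where "B = (LINT x|lborel. \<bar>G x\<bar>) / sqrt (2 * pi)"
  have "m > 0" using assms by (simp add: m_def)
  have dm: "m \<le> cmod (d p)" for p
    unfolding m_def d_def using assms(2,3) by (rule norm_quadratic_symbol_ge)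
  have d_pos: "cmod (d p) > 0" for p
    using dm[of p] \<open>m > 0\<close> by linarith
  have FB: "cmod (fourier G p) \<le> B" for p
    using norm_fourier_le[OF G] by (simp add: B_def)
  have "B \<ge> 0" by (simp add: B_def integral_nonneg_AE)
  have quotient_le: "cmod (fourier G p / d p) \<le> B / m" for p
    using FB[of p] dm[of p] \<open>m > 0\<close> \<open>B \<ge> 0\<close> by (simp add: norm_divide frac_le)
  have product_le: "cmod (complex_of_real (p\<^sup>2) * fourier G p / d p) \<le> (1 + a / m) * B" for p
  proof -
    have "p\<^sup>2 / cmod (d p) \<le> (cmod (d p) + a) / cmod (d p)"
      using abs_Re_le_cmod[of "d p"] dm[of p] \<open>m > 0\<close>
      by (intro divide_right_mono) (auto simp: d_def)
    also have "\<dots> = 1 + a / cmod (d p)"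
      using d_pos[of p] by (simp add: add_divide_distrib)
    also have "\<dots> \<le> 1 + a / m"
      using dm[of p] \<open>m > 0\<close> \<open>a > 0\<close> by (intro add_left_mono frac_le) auto
    finally have "p\<^sup>2 / cmod (d p) * cmod (fourier G p) \<le> (1 + a / m) * B"
      using FB[of p] \<open>B \<ge> 0\<close> \<open>a > 0\<close> \<open>m > 0\<close> by (intro mult_mono) auto
    then show ?thesis by (simp add: norm_divide norm_mult del: of_real_power)
  qed
  show ?thesis
    unfolding N_finite_def d_def[symmetric]
    by (rule conjI; rule Linf_finiteI, rule quotient_le product_le)
qed

lemma N_finite_0_imp_fourier_0_eq_0:
  assumes G: "integrable lborel G" and xG: "integrable lborel (\<lambda>x. x * G x)"
    and "b \<noteq> 0" and "N_finite G 0 b"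
  shows "fourier G 0 = 0"
proof (rule Linf_finite_divide_imp_zero[where d = "\<lambda>p. complex_of_real (p\<^sup>2 - 0) - \<i> * complex_of_real (b * p)"])
  show "Linf_finite (\<lambda>p. fourier G p / (complex_of_real (p\<^sup>2 - 0) - \<i> * complex_of_real (b * p)))"
    using \<open>N_finite G 0 b\<close> unfolding N_finite_def by blast
  show "AE p in lborel. complex_of_real (p\<^sup>2 - 0) - \<i> * complex_of_real (b * p) \<noteq> 0"
    using AE_lborel_singleton[of 0] by eventually_elim (simp add: complex_eq_iff \<open>b \<noteq> 0\<close>)
  show "isCont (fourier G) 0" using G xG by (rule isCont_fourier)
  show "isCont (\<lambda>p. complex_of_real (p\<^sup>2 - 0) - \<i> * complex_of_real (b * p)) 0"
    by (intro continuous_intros)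
qed simp

lemma N_finite_0_if_fourier_0_eq_0:
  assumes G: "integrable lborel G" and xG: "integrable lborel (\<lambda>x. x * G x)"
    and "b \<noteq> 0" and "fourier G 0 = 0"
  shows "N_finite G 0 b"
proof -
  define e where "e p = complex_of_real p - \<i> * complex_of_real b" for p
  define B where "B = (LINT x|lborel. \<bar>G x\<bar>) / sqrt (2 * pi)"
  define L where "L = (LINT x|lborel. \<bar>x * G x\<bar>) / sqrt (2 * pi)"
  have symbol_eq: "complex_of_real (p\<^sup>2 - 0) - \<i> * complex_of_real (b * p) = complex_of_real p * e p" for p
    by (simp add: e_def power2_eq_square algebra_simps)
  have e_ge: "\<bar>p\<bar> \<le> cmod (e p)" "\<bar>b\<bar> \<le> cmod (e p)" for p
    using abs_Re_le_cmod[of "e p"] abs_Im_le_cmod[of "e p"] by (simp_all add: e_def)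
  have lip: "L-lipschitz_on UNIV (fourier G)"
    unfolding L_def using G xG by (rule lipschitz_on_fourier)
  have lin: "cmod (fourier G p) \<le> L * \<bar>p\<bar>" for p
    using lipschitz_onD[OF lip, of p 0] \<open>fourier G 0 = 0\<close> by (simp add: dist_norm)
  have FB: "cmod (fourier G p) \<le> B" for p
    using norm_fourier_le[OF G] by (simp add: B_def)
  have quotient_le: "cmod (fourier G p / (complex_of_real p * e p)) \<le> L / \<bar>b\<bar>" for p
  proof (cases "p = 0")
    case True
    then show ?thesis using lipschitz_on_nonneg[OF lip] by simp
  next
    case False
    have "cmod (fourier G p / (complex_of_real p * e p)) = cmod (fourier G p) / (\<bar>p\<bar> * cmod (e p))"
      by (simp add: norm_divide norm_mult)
    also have "\<dots> \<le> L * \<bar>p\<bar> / (\<bar>p\<bar> * \<bar>b\<bar>)"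
      using lin[of p] e_ge(2)[of p] False \<open>b \<noteq> 0\<close> lipschitz_on_nonneg[OF lip]
      by (intro frac_le mult_left_mono) auto
    also have "\<dots> = L / \<bar>b\<bar>" using False by simp
    finally show ?thesis .
  qed
  have product_le: "cmod (complex_of_real (p\<^sup>2) * fourier G p / (complex_of_real p * e p)) \<le> B" for p
  proof (cases "p = 0")
    case True
    then show ?thesis by (simp add: B_def integral_nonneg_AE)
  next
    case False
    then have "cmod (complex_of_real (p\<^sup>2) * fourier G p / (complex_of_real p * e p))
        = \<bar>p\<bar> / cmod (e p) * cmod (fourier G p)"
      by (simp add: norm_divide norm_mult power2_eq_square)
    also have "\<dots> \<le> 1 * B"
      using e_ge(1)[of p] FB[of p] by (intro mult_mono) (auto simp: divide_le_eq_1)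
    finally show ?thesis by simp
  qed
  show ?thesis
    unfolding N_finite_def symbol_eq
    by (rule conjI; rule Linf_finiteI, rule quotient_le product_le)
qed

lemma N_finite_0_iff:
  assumes "integrable lborel G" and "integrable lborel (\<lambda>x. x * G x)" and "b \<noteq> 0"
  shows "N_finite G 0 b \<longleftrightarrow> (LINT x|lborel. G x) = 0"
  using N_finite_0_imp_fourier_0_eq_0[OF assms] N_finite_0_if_fourier_0_eq_0[OF assms]
  by (auto simp: fourier_0_eq_0_iff)

lemma min_abs_diff_mult_le_abs_square_diff:
  fixes p s :: real
  assumes "0 \<le> s"
  shows "min \<bar>p - s\<bar> \<bar>p + s\<bar> * s \<le> \<bar>p\<^sup>2 - s\<^sup>2\<bar>"
proof -
  have "s \<le> max \<bar>p - s\<bar> \<bar>p + s\<bar>" using assms by linarith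
  then have "min \<bar>p - s\<bar> \<bar>p + s\<bar> * s \<le> min \<bar>p - s\<bar> \<bar>p + s\<bar> * max \<bar>p - s\<bar> \<bar>p + s\<bar>"
    by (intro mult_left_mono) auto
  also have "\<dots> = \<bar>p\<^sup>2 - s\<^sup>2\<bar>"
    by (simp add: min_def max_def power2_eq_square abs_mult[symmetric] algebra_simps)
  finally show ?thesis .
qed

lemma M_finite_imp_fourier_eq_0:
  assumes G: "integrable lborel G" and xG: "integrable lborel (\<lambda>x. x * G x)"
    and "M_finite G a" and "q\<^sup>2 = a"
  shows "fourier G q = 0"
proof (rule Linf_finite_divide_imp_zero[where d = "\<lambda>p. complex_of_real (p\<^sup>2 - a)"])
  show "Linf_finite (\<lambda>p. fourier G p / complex_of_real (p\<^sup>2 - a))"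
    using \<open>M_finite G a\<close> unfolding M_finite_def by blast
  show "AE p in lborel. complex_of_real (p\<^sup>2 - a) \<noteq> 0"
    using AE_lborel_singleton[of q] AE_lborel_singleton[of "- q"]
    by eventually_elim (auto simp: \<open>q\<^sup>2 = a\<close>[symmetric] power2_eq_iff)
  show "isCont (fourier G) q" using G xG by (rule isCont_fourier)
  show "isCont (\<lambda>p. complex_of_real (p\<^sup>2 - a)) q"
    by (intro continuous_intros)
qed (simp add: \<open>q\<^sup>2 = a\<close>)

lemma M_finite_if_fourier_eq_0:
  assumes G: "integrable lborel G" and xG: "integrable lborel (\<lambda>x. x * G x)" and "a > 0"
    and zeros: "fourier G (sqrt a) = 0" "fourier G (- sqrt a) = 0"
  shows "M_finite G a"
proof -
  define s where "s = sqrt a"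
  have "s > 0" and a_eq: "a = s\<^sup>2" using \<open>a > 0\<close> by (simp_all add: s_def)
  define B where "B = (LINT x|lborel. \<bar>G x\<bar>) / sqrt (2 * pi)"
  define L where "L = (LINT x|lborel. \<bar>x * G x\<bar>) / sqrt (2 * pi)"
  have lip: "L-lipschitz_on UNIV (fourier G)"
    unfolding L_def using G xG by (rule lipschitz_on_fourier)
  then have "L \<ge> 0" by (rule lipschitz_on_nonneg)
  have FB: "cmod (fourier G p) \<le> B" for p
    using norm_fourier_le[OF G] by (simp add: B_def)
  have lin: "cmod (fourier G p) \<le> L * min \<bar>p - s\<bar> \<bar>p + s\<bar>" for p
    using lipschitz_onD[OF lip, of p s] lipschitz_onD[OF lip, of p "- s"] zeros
    by (simp add: s_def dist_norm min_def)
  have quotient_le: "cmod (fourier G p / complex_of_real (p\<^sup>2 - a)) \<le> L / s" for p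
  proof (cases "p\<^sup>2 = a")
    case True
    then show ?thesis using \<open>L \<ge> 0\<close> \<open>s > 0\<close> by simp
  next
    case False
    define \<mu> where "\<mu> = min \<bar>p - s\<bar> \<bar>p + s\<bar>"
    have "p \<noteq> s" "p \<noteq> - s" using False by (auto simp: a_eq)
    then have "\<mu> > 0" by (auto simp: \<mu>_def)
    have "cmod (fourier G p / complex_of_real (p\<^sup>2 - a)) = cmod (fourier G p) / \<bar>p\<^sup>2 - s\<^sup>2\<bar>"
      by (simp add: norm_divide a_eq del: of_real_diff of_real_power)
    also have "\<dots> \<le> L * \<mu> / (\<mu> * s)"
      using lin[of p] min_abs_diff_mult_le_abs_square_diff[of s p] \<open>s > 0\<close> \<open>L \<ge> 0\<close> \<open>\<mu> > 0\<close>
      unfolding \<mu>_def by (intro frac_le) auto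
    also have "\<dots> = L / s" using \<open>\<mu> > 0\<close> by simp
    finally show ?thesis .
  qed
  have product_le: "cmod (complex_of_real (p\<^sup>2) * fourier G p / complex_of_real (p\<^sup>2 - a)) \<le> B + a * (L / s)" for p
  proof (cases "p\<^sup>2 = a")
    case True
    then show ?thesis using \<open>L \<ge> 0\<close> \<open>s > 0\<close> \<open>a > 0\<close> by (simp add: B_def integral_nonneg_AE)
  next
    case False
    then have "complex_of_real (p\<^sup>2) * fourier G p / complex_of_real (p\<^sup>2 - a)
        = fourier G p + complex_of_real a * (fourier G p / complex_of_real (p\<^sup>2 - a))"
      by (simp add: field_simps del: of_real_diff of_real_power) (simp add: algebra_simps)
    also have "cmod \<dots> \<le> cmod (fourier G p) + cmod (complex_of_real a * (fourier G p / complex_of_real (p\<^sup>2 - a)))"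
      by (rule norm_triangle_ineq)
    also have "\<dots> = cmod (fourier G p) + a * cmod (fourier G p / complex_of_real (p\<^sup>2 - a))"
      using \<open>a > 0\<close> by (simp only: norm_mult norm_of_real abs_of_pos)
    also have "\<dots> \<le> B + a * (L / s)"
      using FB[of p] quotient_le[of p] \<open>a > 0\<close> by (intro add_mono mult_left_mono) auto
    finally show ?thesis .
  qed
  show ?thesis
    unfolding M_finite_def
    by (rule conjI; rule Linf_finiteI, rule quotient_le product_le)
qed

lemma M_finite_pos_iff:
  assumes "integrable lborel G" and "integrable lborel (\<lambda>x. x * G x)" and "a > 0"
  shows "M_finite G a \<longleftrightarrow> fourier G (sqrt a) = 0 \<and> fourier G (- sqrt a) = 0"
  using M_finite_imp_fourier_eq_0[OF assms(1,2), of a "sqrt a"]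
    M_finite_imp_fourier_eq_0[OF assms(1,2), of a "- sqrt a"] M_finite_if_fourier_eq_0[OF assms]
    \<open>a > 0\<close>
  by auto

lemma M_finite_0_imp_fourier_0_eq_0:
  assumes G: "integrable lborel G" and x2G: "integrable lborel (\<lambda>x. x\<^sup>2 * G x)" and "M_finite G 0"
  shows "fourier G 0 = 0" and "fourier (\<lambda>x. x * G x) 0 = 0"
proof -
  define D where "D = fourier (\<lambda>x. x * G x) 0"
  have quotient: "Linf_finite (\<lambda>p. fourier G p / complex_of_real (p\<^sup>2))"
    using \<open>M_finite G 0\<close> unfolding M_finite_def by simp
  show F0: "fourier G 0 = 0"
    using M_finite_imp_fourier_eq_0[OF G integrable_first_moment[OF G x2G] \<open>M_finite G 0\<close>] by simp
  have "Linf_finite (\<lambda>p. fourier G p / complex_of_real (p\<^sup>2) -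
      (fourier G p - fourier G 0 + \<i> * complex_of_real p * D) / complex_of_real (p\<^sup>2))"
    using quotient Linf_finite_fourier_taylor2_remainder[OF G x2G] unfolding D_def
    by (rule Linf_finite_diff)
  also have "(\<lambda>p. fourier G p / complex_of_real (p\<^sup>2) -
      (fourier G p - fourier G 0 + \<i> * complex_of_real p * D) / complex_of_real (p\<^sup>2))
      = (\<lambda>p. - (\<i> * D) / complex_of_real p)"
    \<comment> \<open>also at p = 0, where all three quotients are 0 since x / 0 = 0\<close>
  proof
    fix p :: real
    show "fourier G p / complex_of_real (p\<^sup>2) -
        (fourier G p - fourier G 0 + \<i> * complex_of_real p * D) / complex_of_real (p\<^sup>2)
        = - (\<i> * D) / complex_of_real p"
      by (cases "p = 0") (simp_all add: F0 field_simps power2_eq_square)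
  qed
  finally have "Linf_finite (\<lambda>p. - (\<i> * D) / complex_of_real p)" .
  then have "- (\<i> * D) = 0"
    by (rule Linf_finite_divide_imp_zero[of _ _ 0])
      (auto intro: continuous_intros simp: AE_lborel_singleton)
  then show "fourier (\<lambda>x. x * G x) 0 = 0" by (simp add: D_def)
qed

lemma M_finite_0_if_fourier_0_eq_0:
  assumes G: "integrable lborel G" and x2G: "integrable lborel (\<lambda>x. x\<^sup>2 * G x)"
    and "fourier G 0 = 0" and "fourier (\<lambda>x. x * G x) 0 = 0"
  shows "M_finite G 0"
  unfolding M_finite_def
proof
  show "Linf_finite (\<lambda>p. fourier G p / complex_of_real (p\<^sup>2 - 0))"
    using Linf_finite_fourier_taylor2_remainder[OF G x2G] assms(3,4) by simp
  show "Linf_finite (\<lambda>p. complex_of_real (p\<^sup>2) * fourier G p / complex_of_real (p\<^sup>2 - 0))"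
  proof (rule Linf_finiteI)
    fix p :: real
    show "cmod (complex_of_real (p\<^sup>2) * fourier G p / complex_of_real (p\<^sup>2 - 0))
        \<le> (LINT x|lborel. \<bar>G x\<bar>) / sqrt (2 * pi)"
      using norm_fourier_le[OF G, of p] by (cases "p = 0") (simp_all add: integral_nonneg_AE)
  qed
qed

lemma M_finite_0_iff:
  assumes "integrable lborel G" and "integrable lborel (\<lambda>x. x\<^sup>2 * G x)"
  shows "M_finite G 0 \<longleftrightarrow> (LINT x|lborel. G x) = 0 \<and> (LINT x|lborel. x * G x) = 0"
  using M_finite_0_imp_fourier_0_eq_0[OF assms] M_finite_0_if_fourier_0_eq_0[OF assms]
  by (auto simp: fourier_0_eq_0_iff)

theorem lemmaA1:
  fixes N K l r :: nat
    and G :: "nat \<Rightarrow> real \<Rightarrow> real"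
    and a b :: "nat \<Rightarrow> real"
  assumes "N \<ge> 4" "K \<ge> 2" "1 \<le> l" "l \<le> K - 1" "K + 1 \<le> r" "r \<le> N - 1"
    and G_L1: "\<And>k. 1 \<le> k \<Longrightarrow> k \<le> N \<Longrightarrow> integrable lborel (G k)"
  shows
    "(\<forall>k. 1 \<le> k \<and> k \<le> l \<and> a k > 0 \<and> b k \<noteq> 0 \<longrightarrow> N_finite (G k) (a k) (b k))
   \<and> (\<forall>k. l + 1 \<le> k \<and> k \<le> K \<and> a k = 0 \<and> b k \<noteq> 0 \<and>
          integrable lborel (\<lambda>x. x * G k x) \<longrightarrow>
          (N_finite (G k) 0 (b k) \<longleftrightarrow> (LINT x|lborel. G k x) = 0))
   \<and> (\<forall>k. K + 1 \<le> k \<and> k \<le> r \<and> a k > 0 \<and> integrable lborel (\<lambda>x. x * G k x) \<longrightarrow>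
          (M_finite (G k) (a k) \<longleftrightarrow>
             (LINT x|lborel. complex_of_real (G k x) *
                 exp (- (\<i> * complex_of_real (sqrt (a k) * x)))) = 0 \<and>
             (LINT x|lborel. complex_of_real (G k x) *
                 exp (\<i> * complex_of_real (sqrt (a k) * x))) = 0))
   \<and> (\<forall>k. r + 1 \<le> k \<and> k \<le> N \<and> a k = 0 \<and> integrable lborel (\<lambda>x. x\<^sup>2 * G k x) \<longrightarrow>
          (M_finite (G k) 0 \<longleftrightarrow>
             (LINT x|lborel. G k x) = 0 \<and> (LINT x|lborel. x * G k x) = 0))"
proof (intro conjI allI impI)
  fix k assume "1 \<le> k \<and> k \<le> l \<and> a k > 0 \<and> b k \<noteq> 0"
  with assms(4-6) show "N_finite (G k) (a k) (b k)"
    by (intro N_finite_if_pos G_L1) auto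
next
  fix k assume "l + 1 \<le> k \<and> k \<le> K \<and> a k = 0 \<and> b k \<noteq> 0 \<and> integrable lborel (\<lambda>x. x * G k x)"
  with assms(5,6) show "N_finite (G k) 0 (b k) \<longleftrightarrow> (LINT x|lborel. G k x) = 0"
    by (intro N_finite_0_iff G_L1) auto
next
  fix k assume "K + 1 \<le> k \<and> k \<le> r \<and> a k > 0 \<and> integrable lborel (\<lambda>x. x * G k x)"
  with assms(6) have "M_finite (G k) (a k) \<longleftrightarrow>
      fourier (G k) (sqrt (a k)) = 0 \<and> fourier (G k) (- sqrt (a k)) = 0"
    by (intro M_finite_pos_iff G_L1) auto
  then show "M_finite (G k) (a k) \<longleftrightarrow>
      (LINT x|lborel. complex_of_real (G k x) * exp (- (\<i> * complex_of_real (sqrt (a k) * x)))) = 0 \<and>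
      (LINT x|lborel. complex_of_real (G k x) * exp (\<i> * complex_of_real (sqrt (a k) * x))) = 0"
    by (simp add: fourier_eq_0_iff)
next
  fix k assume "r + 1 \<le> k \<and> k \<le> N \<and> a k = 0 \<and> integrable lborel (\<lambda>x. x\<^sup>2 * G k x)"
  then show "M_finite (G k) 0 \<longleftrightarrow> (LINT x|lborel. G k x) = 0 \<and> (LINT x|lborel. x * G k x) = 0"
    by (intro M_finite_0_iff G_L1) auto
qed

end
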